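(* Let $Z\subseteq\{0,1\}^n$ be nonempty and $\bm a,\bm c\in\mathbb R^n$. The problem $$\text{(I)}\quad \min\ \bm a^\top\bm x+\bm c^\top\bm z\ \ \text{s.t.}\ \ \|\bm x\|_2^2\le1,\ x_i(1-z_i)=0\ (i=1,\dots,n),\ \bm x\in\mathbb R^n,\ \bm z\in Z$$ is equivalent to the problem $$\text{(II)}\quad \min\ \bm a^\top\bm x+\bm c^\top\bm z\ \ \text{s.t.}\ \ (\bm x,\bm z)\in P(\bm a),$$ in the sense that (I) and (II) have the same optimal objective value and there exists an optimal solution of (II) that is also optimal for (I).
   Context: For $\bm\alpha\in\mathbb R^n$, $P_0(\bm\alpha)=\{(\bm x,\bm z)\in\mathbb R^n\times Z:\ \sum_{i=1}^n|\alpha_ix_i|\le\sqrt{\sum_{i=1}^n\alpha_i^2z_i}\}$ and $P(\bm\alpha)=\operatorname{conv}(P_0(\bm\alpha))$, the convex hull. *)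

theory Defs
  imports "HOL-Analysis.Analysis"
begin

definition P0 :: "real^'n::finite \<Rightarrow> (real^'n) set \<Rightarrow> ((real^'n) \<times> (real^'n)) set" where
  "P0 \<alpha> Z = {(x, z). z \<in> Z \<and>
      (\<Sum>i\<in>UNIV. \<bar>\<alpha>$i * x$i\<bar>) \<le> sqrt (\<Sum>i\<in>UNIV. (\<alpha>$i)^2 * z$i)}"

definition P :: "real^'n::finite \<Rightarrow> (real^'n) set \<Rightarrow> ((real^'n) \<times> (real^'n)) set" where
  "P \<alpha> Z = convex hull (P0 \<alpha> Z)"

definition feasI :: "(real^'n::finite) set \<Rightarrow> ((real^'n) \<times> (real^'n)) set" where
  "feasI Z = {(x, z). (\<Sum>i\<in>UNIV. (x$i)^2) \<le> 1 \<and> (\<forall>i. x$i * (1 - z$i) = 0) \<and> z \<in> Z}"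

end

theory Submission
  imports Defs
begin

text \<open>For a fixed binary \<open>z\<close>, both feasible sets force \<open>a \<bullet> x \<ge> -\<parallel>a * z\<parallel>\<close>: in (I) because
  \<open>x\<close> is supported on \<open>z\<close> and lies in the unit ball (Cauchy--Schwarz), in \<open>P0\<close> because
  \<open>-a \<bullet> x \<le> \<Sum>\<bar>a\<^sub>i x\<^sub>i\<bar>\<close>. Since \<open>z\<close> is binary, \<open>\<parallel>a * z\<parallel> = sqrt (\<Sum> a\<^sub>i\<^sup>2 z\<^sub>i)\<close>, so the objective is
  bounded below by the minimum of \<open>c \<bullet> z - \<parallel>a * z\<parallel>\<close> over \<open>Z\<close>; the bound survives the convex hull
  because it is a linear inequality. It is attained at \<open>(-sgn (a * z), z)\<close> for a minimising \<open>z\<close>,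
  a point lying both in (I) and in \<open>P0\<close>.\<close>

lemma finite_binary_vectors:
  "finite {z::real^'n::finite. \<forall>i. z$i = 0 \<or> z$i = 1}"
proof -
  have "{z::real^'n. \<forall>i. z$i = 0 \<or> z$i = 1} \<subseteq> range (\<lambda>f. \<chi> i. if f i then 1 else 0)"
  proof
    fix z :: "real^'n" assume "z \<in> {z. \<forall>i. z$i = 0 \<or> z$i = 1}"
    then have "z = (\<chi> i. if z$i = 1 then 1 else 0)" by (auto simp: vec_eq_iff)
    then show "z \<in> range (\<lambda>f. \<chi> i. if f i then 1 else 0)"
      by (intro image_eqI[where x="\<lambda>i. z$i = 1"]) auto
  qed
  then show ?thesis by (rule finite_subset) simp
qed

lemma sum_power2_components: "(\<Sum>i\<in>UNIV. (x$i)^2) = (norm x)^2"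
  for x :: "real^'n::finite"
  by (simp add: norm_vec_def L2_set_def sum_nonneg)

context
  fixes a z :: "real^'n::finite"
  assumes binary: "\<And>i. z$i = 0 \<or> z$i = 1"
begin

lemma norm_mult_binary: "norm (a * z) = sqrt (\<Sum>i\<in>UNIV. (a$i)^2 * z$i)"
proof -
  have "(a$i * z$i)^2 = (a$i)^2 * z$i" for i
    using binary[of i] by auto
  then show ?thesis
    by (simp add: norm_vec_def L2_set_def)
qed

lemma inner_mult_binary_eq_norm: "a \<bullet> (a * z) = (norm (a * z))^2"
proof -
  have "a$i * (a$i * z$i) = (a$i * z$i) * (a$i * z$i)" for i
    using binary[of i] by auto
  then show ?thesis
    unfolding power2_norm_eq_inner inner_vec_def by (intro sum.cong) simp_all
qed

lemma inner_sgn_mult_binary: "a \<bullet> sgn (a * z) = sqrt (\<Sum>i\<in>UNIV. (a$i)^2 * z$i)"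
proof -
  have "a \<bullet> sgn (a * z) = (norm (a * z))^2 / norm (a * z)"
    by (simp add: sgn_div_norm inner_mult_binary_eq_norm divide_inverse_commute)
  also have "\<dots> = norm (a * z)"
    by (simp add: power2_eq_square)
  finally show ?thesis
    by (simp add: norm_mult_binary)
qed

lemma neg_sgn_mult_binary_in_feasI:
  assumes "z \<in> Z"
  shows "(- sgn (a * z), z) \<in> feasI Z"
proof -
  have "norm (- sgn (a * z)) \<le> 1"
    by (simp add: norm_sgn)
  moreover have "(sgn (a * z))$i * (1 - z$i) = 0" for i
    using binary[of i] by (auto simp: sgn_div_norm)
  ultimately show ?thesis
    using assms by (simp add: feasI_def sum_power2_components power_le_one_iff)
qed

lemma neg_sgn_mult_binary_in_P0:
  assumes "z \<in> Z"
  shows "(- sgn (a * z), z) \<in> P0 a Z"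
proof -
  have "a$i * (sgn (a * z))$i = (a$i)^2 * z$i / norm (a * z)" for i
    using binary[of i] by (auto simp: sgn_div_norm power2_eq_square divide_inverse_commute)
  then have "\<bar>a$i * (sgn (a * z))$i\<bar> = a$i * (sgn (a * z))$i" for i
    using binary[of i] by auto
  then have "(\<Sum>i\<in>UNIV. \<bar>a$i * (- sgn (a * z))$i\<bar>) = a \<bullet> sgn (a * z)"
    by (simp add: inner_vec_def)
  then show ?thesis
    using assms by (simp add: P0_def inner_sgn_mult_binary)
qed

end

lemma feasI_objective_lower_bound:
  fixes a :: "real^'n::finite"
  assumes "(x, z) \<in> feasI Z" "\<And>i. z$i = 0 \<or> z$i = 1"
  shows "- sqrt (\<Sum>i\<in>UNIV. (a$i)^2 * z$i) \<le> a \<bullet> x"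
proof -
  from assms(1) have x1: "norm x \<le> 1" and "\<And>i. x$i * (1 - z$i) = 0"
    by (auto simp: feasI_def sum_power2_components power_le_one_iff)
  then have "x$i = z$i * x$i" for i
    by (simp add: algebra_simps)
  then have "a \<bullet> x = (a * z) \<bullet> x"
    unfolding inner_vec_def by (intro sum.cong refl) (metis inner_real_def mult.assoc vector_mult_component)
  also have "\<dots> \<ge> - (norm (a * z) * norm x)"
    using Cauchy_Schwarz_ineq2[of "a * z" x] by linarith
  moreover have "norm (a * z) * norm x \<le> norm (a * z)"
    using x1 by (simp add: mult_left_le)
  ultimately show ?thesis
    using norm_mult_binary[OF assms(2), of a] by linarith
qed

lemma P0_objective_lower_bound:
  fixes a :: "real^'n::finite"
  assumes "(x, z) \<in> P0 a Z"
  shows "- sqrt (\<Sum>i\<in>UNIV. (a$i)^2 * z$i) \<le> a \<bullet> x"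
proof -
  have "- (a \<bullet> x) \<le> (\<Sum>i\<in>UNIV. \<bar>a$i * x$i\<bar>)"
    unfolding inner_vec_def sum_negf[symmetric] by (intro sum_mono) auto
  with assms show ?thesis by (simp add: P0_def)
qed

lemma objective_lower_bound:
  fixes a c :: "real^'n::finite"
  assumes "q \<in> feasI Z \<union> P0 a Z"
    and "\<And>z i. z \<in> Z \<Longrightarrow> z$i = 0 \<or> z$i = 1"
    and "\<And>z. z \<in> Z \<Longrightarrow> m \<le> c \<bullet> z - sqrt (\<Sum>i\<in>UNIV. (a$i)^2 * z$i)"
  shows "m \<le> (a, c) \<bullet> q"
proof -
  obtain x z where q: "q = (x, z)" and "z \<in> Z"
    using assms(1) by (cases q) (auto simp: feasI_def P0_def)
  moreover have "- sqrt (\<Sum>i\<in>UNIV. (a$i)^2 * z$i) \<le> a \<bullet> x"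
    using assms(1,2) \<open>z \<in> Z\<close> feasI_objective_lower_bound P0_objective_lower_bound
    unfolding q by blast
  ultimately show ?thesis
    using assms(3)[of z] by simp
qed

lemma convex_hull_inner_lower_bound:
  assumes "p \<in> convex hull S" "\<And>q. q \<in> S \<Longrightarrow> m \<le> u \<bullet> q"
  shows "m \<le> u \<bullet> p"
proof -
  have "convex hull S \<subseteq> {q. m \<le> u \<bullet> q}"
    by (rule hull_minimal) (use assms(2) convex_halfspace_ge in auto)
  with assms(1) show ?thesis by blast
qed

theorem proposition3:
  fixes Z :: "(real^'n::finite) set" and a c :: "real^'n"
  assumes "Z \<noteq> {}"
    and "\<And>z i. z \<in> Z \<Longrightarrow> z$i = 0 \<or> z$i = 1"
  shows "(INF p\<in>feasI Z. a \<bullet> fst p + c \<bullet> snd p) = (INF p\<in>P a Z. a \<bullet> fst p + c \<bullet> snd p)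
    \<and> (\<exists>p\<in>P a Z. (\<forall>q\<in>P a Z. a \<bullet> fst p + c \<bullet> snd p \<le> a \<bullet> fst q + c \<bullet> snd q)
           \<and> p \<in> feasI Z \<and> (\<forall>q\<in>feasI Z. a \<bullet> fst p + c \<bullet> snd p \<le> a \<bullet> fst q + c \<bullet> snd q))"
proof -
  have objective: "a \<bullet> fst p + c \<bullet> snd p = (a, c) \<bullet> p" for p
    by (cases p) simp
  define g where "g z = c \<bullet> z - sqrt (\<Sum>i\<in>UNIV. (a$i)^2 * z$i)" for z
  have "finite Z"
    using finite_subset[OF _ finite_binary_vectors] assms(2) by blast
  then obtain zs where zs: "zs \<in> Z" "\<And>z. z \<in> Z \<Longrightarrow> g zs \<le> g z"
    using ex_is_arg_min_if_finite[OF _ assms(1), of g] by (auto simp: is_arg_min_linorder)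
  define ps where "ps = (- sgn (a * zs), zs)"
  have ps_feasI: "ps \<in> feasI Z" and ps_P0: "ps \<in> P0 a Z"
    unfolding ps_def using assms(2) zs(1)
    by (simp_all add: neg_sgn_mult_binary_in_feasI neg_sgn_mult_binary_in_P0)
  have ps_P: "ps \<in> P a Z"
    unfolding P_def using ps_P0 by (rule hull_inc)
  have ps_value: "(a, c) \<bullet> ps = g zs"
    unfolding ps_def g_def using assms(2) zs(1) by (simp add: inner_sgn_mult_binary)
  have ps_opt: "(a, c) \<bullet> ps \<le> (a, c) \<bullet> q" if "q \<in> feasI Z \<union> P0 a Z" for q
    using that assms(2) by (rule objective_lower_bound) (use ps_value zs(2) g_def in auto)
  have P_opt: "(a, c) \<bullet> ps \<le> (a, c) \<bullet> q" if "q \<in> P a Z" for q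
    using that ps_opt unfolding P_def by (rule convex_hull_inner_lower_bound) blast
  have "(INF q\<in>feasI Z. (a, c) \<bullet> q) = (a, c) \<bullet> ps"
    using ps_feasI ps_opt by (intro cInf_eq_minimum) auto
  moreover have "(INF q\<in>P a Z. (a, c) \<bullet> q) = (a, c) \<bullet> ps"
    using ps_P P_opt by (intro cInf_eq_minimum) auto
  ultimately show ?thesis
    unfolding objective using ps_P ps_feasI ps_opt P_opt
    by (intro conjI bexI[of _ ps] ballI) simp_all
qed

end
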